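(* Let $A,B$ be real symmetric $4\times 4$ matrices defining quadrics $\mathcal A: X^TAX=0$, $\mathcal B: X^TBX=0$ in $\mathbb{PR}^3$ with $f(\lambda)=\det(\lambda A-B)$ not identically zero. If $f(\lambda)=0$ has two identical pairs of complex conjugate roots with Segre characteristic $[22]$, then the index sequence is $\langle 2\rangle$ and the QSIC comprises a real line and a space cubic curve that do not intersect at any real point.
   Context: $X=(x,y,z,w)^T$ homogeneous coordinates; QSIC $=\mathcal A\cap\mathcal B$. One may take $A$ nonsingular (changing basis of the pencil). Segre characteristic $[22]$: $A^{-1}B$ has two distinct eigenvalues (here a complex conjugate pair, each a double root of $f$), each with a single $2\times2$ Jordan block. $\mathrm{Id}(\lambda)$ = number of positive eigenvalues of $\lambda A-B$; when $f$ has no real roots, the index sequence is $\langle s_0\rangle$ with $s_0$ the constant value of $\mathrm{Id}$ on $\mathbb R$. *)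

theory Defs
  imports "Jordan_Normal_Form.Jordan_Normal_Form"
begin

definition pencil_poly :: "real mat \<Rightarrow> real mat \<Rightarrow> real poly" where
  "pencil_poly A B = det (mat (dim_row A) (dim_col A) (\<lambda>(i,j). [: - B $$ (i,j), A $$ (i,j) :]))"

definition num_pos_eig :: "real mat \<Rightarrow> nat" where
  "num_pos_eig M = (\<Sum>r\<in>{r. r > 0 \<and> poly (char_poly M) r = 0}. order r (char_poly M))"

definition Id_idx :: "real mat \<Rightarrow> real mat \<Rightarrow> real \<Rightarrow> nat" where
  "Id_idx A B l = num_pos_eig (l \<cdot>\<^sub>m A - B)"

abbreviation cmat :: "real mat \<Rightarrow> complex mat" where
  "cmat M \<equiv> map_mat complex_of_real M"

abbreviation cvec :: "real vec \<Rightarrow> complex vec" where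
  "cvec v \<equiv> map_vec complex_of_real v"

(* Complex points of the QSIC, as nonzero vectors of C^4 (homogeneous coordinates;
   the set is closed under nonzero scaling) *)
definition qsic :: "real mat \<Rightarrow> real mat \<Rightarrow> complex vec set" where
  "qsic A B = {X. X \<in> carrier_vec 4 \<and> X \<noteq> 0\<^sub>v 4 \<and>
      X \<bullet> (cmat A *\<^sub>v X) = 0 \<and> X \<bullet> (cmat B *\<^sub>v X) = 0}"

definition proj_line :: "real vec \<Rightarrow> real vec \<Rightarrow> complex vec set" where
  "proj_line P Q = {s \<cdot>\<^sub>v cvec P + t \<cdot>\<^sub>v cvec Q | s t. (s, t) \<noteq> (0, 0)}"

definition real_line :: "complex vec set \<Rightarrow> bool" where
  "real_line L \<longleftrightarrow> (\<exists>P Q. P \<in> carrier_vec 4 \<and> Q \<in> carrier_vec 4 \<and>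
      (\<forall>a b. a \<cdot>\<^sub>v P + b \<cdot>\<^sub>v Q = 0\<^sub>v 4 \<longrightarrow> a = 0 \<and> b = 0) \<and> L = proj_line P Q)"

definition proj_cubic :: "real vec \<Rightarrow> real vec \<Rightarrow> real vec \<Rightarrow> real vec \<Rightarrow> complex vec set" where
  "proj_cubic M0 M1 M2 M3 = {(s^3) \<cdot>\<^sub>v cvec M0 + (s^2 * t) \<cdot>\<^sub>v cvec M1 + (s * t^2) \<cdot>\<^sub>v cvec M2
      + (t^3) \<cdot>\<^sub>v cvec M3 | s t. (s, t) \<noteq> (0, 0)}"

definition space_cubic :: "complex vec set \<Rightarrow> bool" where
  "space_cubic C \<longleftrightarrow> (\<exists>M0 M1 M2 M3. M0 \<in> carrier_vec 4 \<and> M1 \<in> carrier_vec 4 \<and>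
      M2 \<in> carrier_vec 4 \<and> M3 \<in> carrier_vec 4 \<and>
      det (mat_of_cols 4 [M0, M1, M2, M3]) \<noteq> 0 \<and> C = proj_cubic M0 M1 M2 M3)"

definition is_real_vec :: "complex vec \<Rightarrow> bool" where
  "is_real_vec X \<longleftrightarrow> (\<forall>i < dim_vec X. Im (X $ i) = 0)"

(* Segre characteristic [22] with eigenvalues z, conj z: A^{-1}B (over C) has Jordan form
   consisting of one 2x2 block for z and one 2x2 block for cnj z *)
definition segre_22 :: "real mat \<Rightarrow> real mat \<Rightarrow> complex \<Rightarrow> bool" where
  "segre_22 A B z \<longleftrightarrow> invertible_mat A \<and>
     (\<exists>M \<in> carrier_mat 4 4. cmat A * M = cmat B \<and> jordan_nf M [(2, z), (2, cnj z)])"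

end

theory Submission
  imports Defs "Jordan_Normal_Form.Jordan_Normal_Form_Uniqueness" "Jordan_Normal_Form.Jordan_Normal_Form_Existence"
begin

text \<open>Let \<open>b0, b1\<close> be a Jordan chain of \<open>A\<^sup>-\<^sup>1 B\<close> for \<open>z\<close>; the conjugates \<open>b2, b3\<close> form one
  for \<open>cnj z\<close>. Symmetry of \<open>A\<close> and \<open>B\<close> makes all \<open>A\<close>-products of these vectors vanish except
  \<open>a01 = b0\<^sup>T A b1 \<noteq> 0\<close>, \<open>a11 = b1\<^sup>T A b1\<close> and their conjugates, so in the coordinates
  \<open>X = p b0 + q b1 + r b2 + s b3\<close> both quadratic forms are explicit, and the real points are those
  with \<open>r = cnj p\<close>, \<open>s = cnj q\<close>.

  For real \<open>l\<close> this exhibits real 2-planes on which \<open>l A - B\<close> is positive, respectively negative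
  definite; diagonalising the symmetric matrix \<open>l A - B\<close> shows that it has exactly two positive
  eigenvalues.

  The QSIC is cut out by the forms of \<open>B - cnj z A\<close> and \<open>B - z A\<close>, which only involve
  \<open>(p, q, s)\<close> and \<open>(q, r, s)\<close>. Either \<open>q = s = 0\<close>, the real line through \<open>b0\<close> and \<open>b2\<close>,
  or \<open>q s \<noteq> 0\<close>, the equations are linear in \<open>p\<close> and \<open>r\<close>, and a cube root of \<open>q s\<close>
  parametrises a twisted cubic. On the intersection one of \<open>p\<close>, \<open>r\<close> vanishes and the other
  does not, which is impossible at a real point.\<close>

section \<open>Real symmetric matrices\<close>

lemma symmetric_mat_entry:
  assumes "S \<in> carrier_mat n n" and "transpose_mat S = S" and "i < n" and "j < n"
  shows "S $$ (j, i) = S $$ (i, j)"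
  by (metis assms carrier_matD index_transpose_mat(1))

lemma scalar_prod_mult_symmetric:
  fixes S :: "'a :: comm_ring_1 mat"
  assumes S: "S \<in> carrier_mat n n" and sym: "transpose_mat S = S"
    and x: "x \<in> carrier_vec n" and y: "y \<in> carrier_vec n"
  shows "x \<bullet> (S *\<^sub>v y) = y \<bullet> (S *\<^sub>v x)"
proof -
  have "x \<bullet> (S *\<^sub>v y) = (transpose_mat S *\<^sub>v x) \<bullet> y" using transpose_vec_mult_scalar[OF S y x] by simp
  also have "\<dots> = y \<bullet> (S *\<^sub>v x)" unfolding sym using S x y by (simp add: comm_scalar_prod[of _ n])
  finally show ?thesis .
qed

lemma cmat_symmetric:
  assumes "transpose_mat S = S"
  shows "transpose_mat (cmat S) = cmat S"
  by (metis assms map_mat_transpose)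

lemma cnj_cmat_mult_vec:
  assumes "A \<in> carrier_mat n m" and "x \<in> carrier_vec m"
  shows "map_vec cnj (cmat A *\<^sub>v x) = cmat A *\<^sub>v map_vec cnj x"
  using assms by (intro eq_vecI) (auto simp: scalar_prod_def)

lemma cnj_scalar_prod:
  assumes "x \<in> carrier_vec n" and "y \<in> carrier_vec n"
  shows "map_vec cnj x \<bullet> map_vec cnj y = cnj (x \<bullet> y)"
  using assms by (simp add: scalar_prod_def)

lemma real_symmetric_eigenvalue_real:
  fixes S :: "real mat"
  assumes S: "S \<in> carrier_mat n n" and sym: "transpose_mat S = S"
    and v: "v \<in> carrier_vec n" "v \<noteq> 0\<^sub>v n" and ev: "cmat S *\<^sub>v v = c \<cdot>\<^sub>v v"
  shows "c \<in> \<real>"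
proof -
  let ?w = "map_vec cnj v"
  have cS: "cmat S \<in> carrier_mat n n" using S by simp
  note cS_sym = cmat_symmetric[OF sym]
  have w: "?w \<in> carrier_vec n" using v by simp
  have N: "?w \<bullet> v \<noteq> 0"
    using conjugate_square_eq_0_vec[OF v(1)] v comm_scalar_prod[OF w v(1)]
    by (simp add: conjugate_vec_def map_vec_def)
  have "c * (?w \<bullet> v) = ?w \<bullet> (cmat S *\<^sub>v v)" unfolding ev using v w by simp
  also have "\<dots> = v \<bullet> (cmat S *\<^sub>v ?w)" by (rule scalar_prod_mult_symmetric[OF cS cS_sym w v(1)])
  also have "\<dots> = v \<bullet> map_vec cnj (c \<cdot>\<^sub>v v)" unfolding cnj_cmat_mult_vec[OF S v(1), symmetric] ev ..
  also have "\<dots> = v \<bullet> (cnj c \<cdot>\<^sub>v ?w)" by (intro arg_cong[where f = "(\<bullet>) v"] eq_vecI) auto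
  also have "\<dots> = cnj c * (?w \<bullet> v)" using v w by (simp add: comm_scalar_prod[OF v(1) w])
  finally have "c = cnj c" using N by simp
  thus ?thesis by (metis Reals_cnj_iff)
qed

lemma real_symmetric_char_poly_splits:
  fixes S :: "real mat"
  assumes S: "S \<in> carrier_mat n n" and sym: "transpose_mat S = S"
  shows "\<exists>rs. char_poly S = (\<Prod>r\<leftarrow>rs. [:- r, 1:])"
proof -
  interpret of_real_poly: map_poly_comm_ring_hom "of_real :: real \<Rightarrow> complex" ..
  let ?p = "char_poly (cmat S)"
  have cS: "cmat S \<in> carrier_mat n n" using S by simp
  have cp: "?p = map_poly of_real (char_poly S)"
    by (rule of_real_hom.char_poly_hom[OF S])
  obtain cs where "Polynomial.smult (lead_coeff ?p) (\<Prod>c\<leftarrow>cs. [:- c, 1:]) = ?p"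
    using fundamental_theorem_algebra_factorized by blast
  hence cs: "?p = (\<Prod>c\<leftarrow>cs. [:- c, 1:])" using degree_monic_char_poly[OF cS] by simp
  have real: "c \<in> \<real>" if c: "c \<in> set cs" for c
  proof -
    have "poly ?p c = 0" unfolding cs using c by (rule linear_poly_root)
    hence "eigenvalue (cmat S) c" using eigenvalue_root_char_poly[OF cS] by simp
    then obtain v where "eigenvector (cmat S) v c" unfolding eigenvalue_def by blast
    hence "v \<in> carrier_vec n" "v \<noteq> 0\<^sub>v n" "cmat S *\<^sub>v v = c \<cdot>\<^sub>v v"
      unfolding eigenvector_def using S by auto
    thus ?thesis by (rule real_symmetric_eigenvalue_real[OF S sym])
  qed
  define rs where "rs = map Re cs"
  have "cs = map complex_of_real rs" unfolding rs_def using real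
    by (induct cs) (auto simp: complex_is_Real_iff complex_eq_iff)
  hence "map_poly complex_of_real (char_poly S) = map_poly of_real (\<Prod>r\<leftarrow>rs. [:- r, 1:])"
    using cp cs by (simp add: o_def of_real_poly.hom_prod_list)
  hence "char_poly S = (\<Prod>r\<leftarrow>rs. [:- r, 1:])"
    by (simp add: poly_eq_iff coeff_map_poly)
  thus ?thesis by blast
qed

lemma real_vec_self_scalar_prod_eq_0:
  fixes x :: "real vec"
  assumes "x \<in> carrier_vec n" and "x \<bullet> x = 0"
  shows "x = 0\<^sub>v n"
  using conjugate_square_eq_0_vec[OF assms(1)] assms(2) by simp

lemma real_symmetric_kernel_mult_self:
  fixes C :: "real mat"
  assumes C: "C \<in> carrier_mat n n" and sym: "transpose_mat C = C"
    and v: "v \<in> carrier_vec n" and CCv: "C *\<^sub>v (C *\<^sub>v v) = 0\<^sub>v n"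
  shows "C *\<^sub>v v = 0\<^sub>v n"
proof -
  have "(C *\<^sub>v v) \<bullet> (C *\<^sub>v v) = (transpose_mat C *\<^sub>v v) \<bullet> (C *\<^sub>v v)" unfolding sym ..
  also have "\<dots> = v \<bullet> (C *\<^sub>v (C *\<^sub>v v))" using transpose_vec_mult_scalar[OF C _ v] C v by simp
  also have "\<dots> = 0" unfolding CCv using v by simp
  finally show ?thesis using real_vec_self_scalar_prod_eq_0 C v by simp
qed

lemma sum_list_min_1_eq_min_2:
  fixes ks :: "nat list"
  assumes "(\<Sum>k\<leftarrow>ks. min 1 k) = (\<Sum>k\<leftarrow>ks. min 2 k)" and "k \<in> set ks"
  shows "k \<le> 1"
  using assms
proof (induct ks)
  case (Cons a ks)
  have "(\<Sum>k\<leftarrow>ks. min 1 k) \<le> (\<Sum>k\<leftarrow>ks. min (2::nat) k)" by (intro sum_list_mono) simp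
  with Cons show ?case by auto
qed simp

text \<open>The kernels of \<open>S - e I\<close> and \<open>(S - e I)\<^sup>2\<close> coincide, so every Jordan block has size 1.\<close>
lemma real_symmetric_jordan_blocks_trivial:
  fixes S :: "real mat"
  assumes S: "S \<in> carrier_mat n n" and sym: "transpose_mat S = S" and jnf: "jordan_nf S n_as"
    and ke: "(k, e) \<in> set n_as"
  shows "k = 1"
proof -
  define C where "C = char_matrix S e"
  have C: "C \<in> carrier_mat n n" unfolding C_def using S by simp
  have C_sym: "transpose_mat C = C"
    unfolding C_def char_matrix_def using S symmetric_mat_entry[OF S sym] by (intro eq_matI) auto
  have "mat_kernel (C ^\<^sub>m 2) = mat_kernel C"
    using C real_symmetric_kernel_mult_self[OF C C_sym]
    by (auto simp: mat_kernel_def numeral_2_eq_2 assoc_mult_mat_vec)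
  hence "dim_gen_eigenspace S e 1 = dim_gen_eigenspace S e 2"
    unfolding dim_gen_eigenspace_def C_def[symmetric] kernel_dim_def using C by simp
  hence "(\<Sum>k\<leftarrow>map fst [(n, e')\<leftarrow>n_as. e' = e]. min 1 k)
      = (\<Sum>k\<leftarrow>map fst [(n, e')\<leftarrow>n_as. e' = e]. min 2 k)"
    unfolding dim_gen_eigenspace[OF jnf] .
  from sum_list_min_1_eq_min_2[OF this] ke have "k \<le> 1" by force
  moreover have "k \<noteq> 0" using jnf ke unfolding jordan_nf_def by force
  ultimately show "k = 1" by simp
qed

lemma real_symmetric_jordan_nf_diagonal:
  fixes S :: "real mat"
  assumes S: "S \<in> carrier_mat n n" and sym: "transpose_mat S = S"
  obtains ds where "jordan_nf S (map (Pair 1) ds)"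
proof -
  obtain rs where "char_poly S = (\<Prod>r\<leftarrow>rs. [:- r, 1:])"
    using real_symmetric_char_poly_splits[OF S sym] by blast
  from jordan_nf_exists[OF S this] obtain n_as where jnf: "jordan_nf S n_as" by blast
  have "n_as = map (Pair 1) (map snd n_as)"
    using real_symmetric_jordan_blocks_trivial[OF S sym jnf] by (induct n_as) auto
  with jnf show thesis by (metis that)
qed

lemma jordan_matrix_trivial_blocks:
  "jordan_matrix (map (Pair (1::nat)) ds) = mat_diag (length ds) ((!) ds)"
proof (induct ds)
  case Nil
  show ?case by (rule eq_matI) (auto simp: jordan_matrix_def mat_diag_def)
next
  case (Cons d ds)
  have dims: "sum_list (map fst (map (Pair (1::nat)) ds)) = length ds" by (induct ds) auto
  show ?case unfolding list.map jordan_matrix_Cons Cons dims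
    by (rule eq_matI) (auto simp: jordan_block_def nth_Cons' four_block_mat_def mat_diag_def)
qed

lemma jordan_nf_diagonal_eigenbasis:
  assumes S: "S \<in> carrier_mat n n" and jnf: "jordan_nf S (map (Pair 1) ds)"
  obtains P Q where "P \<in> carrier_mat n n" and "Q \<in> carrier_mat n n" and "P * Q = 1\<^sub>m n"
    and "length ds = n" and "S * P = P * mat_diag n ((!) ds)"
proof -
  let ?D = "mat_diag (length ds) ((!) ds)"
  from jnf have "similar_mat S ?D" unfolding jordan_nf_def jordan_matrix_trivial_blocks by simp
  then obtain P Q where wit: "similar_mat_wit S ?D P Q" unfolding similar_mat_def by blast
  note PQ = similar_mat_witD2(1)[OF S wit] and QP = similar_mat_witD2(2)[OF S wit]
    and SPDQ = similar_mat_witD2(3)[OF S wit] and D = similar_mat_witD2(5)[OF S wit]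
    and P = similar_mat_witD2(6)[OF S wit] and Q = similar_mat_witD2(7)[OF S wit]
  have len: "length ds = n" using carrier_matD(1)[OF D] carrier_matD(1)[OF mat_diag_dim] by metis
  have "S * P = P * ?D * (Q * P)" unfolding SPDQ using P Q D by (meson assoc_mult_mat mult_carrier_mat)
  also have "\<dots> = P * mat_diag n ((!) ds)" unfolding QP len using P by (metis mat_diag_dim mult_carrier_mat right_mult_one_mat)
  finally show thesis using that P Q PQ len by blast
qed

lemma num_pos_eig_jordan_nf_diagonal:
  assumes S: "S \<in> carrier_mat n n" and jnf: "jordan_nf S (map (Pair 1) ds)"
  shows "num_pos_eig S = length (filter ((<) 0) ds)"
proof -
  have ord: "Polynomial.order r (char_poly S) = count_list ds r" for r
    unfolding jordan_nf_order[OF jnf] count_list_eq_length_filter by (induct ds) auto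
  have "char_poly S \<noteq> 0" using degree_monic_char_poly[OF S] by auto
  hence "poly (char_poly S) r = 0 \<longleftrightarrow> r \<in> set ds" for r
    using order_root[of "char_poly S" r] ord[of r] count_list_0_iff[of ds r] by auto
  hence roots: "{r. 0 < r \<and> poly (char_poly S) r = 0} = set (filter ((<) 0) ds)" by auto
  have pos: "count_list ds r = count_list (filter ((<) 0) ds) r" if "r \<in> set (filter ((<) 0) ds)" for r
    using that unfolding count_list_eq_length_filter filter_filter by (intro arg_cong[where f = length] filter_cong) auto
  have "num_pos_eig S = (\<Sum>r\<in>set (filter ((<) 0) ds). count_list (filter ((<) 0) ds) r)"
    unfolding num_pos_eig_def roots ord using pos by (rule sum.cong[OF refl])
  also have "\<dots> = length (filter ((<) 0) ds)" by (rule sum_count_set) auto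
  finally show ?thesis .
qed

lemma scalar_prod_mult_mat_vec_gram:
  fixes P :: "'a :: comm_ring_1 mat"
  assumes P: "P \<in> carrier_mat n n" and a: "a \<in> carrier_vec n" and b: "b \<in> carrier_vec n"
  shows "(P *\<^sub>v a) \<bullet> (P *\<^sub>v b) = (\<Sum>i<n. \<Sum>j<n. (transpose_mat P * P) $$ (i, j) * a $ j * b $ i)"
proof -
  let ?G = "transpose_mat P * P"
  have G: "?G \<in> carrier_mat n n" using P by simp
  have "(P *\<^sub>v a) \<bullet> (P *\<^sub>v b) = (transpose_mat P *\<^sub>v (P *\<^sub>v a)) \<bullet> b"
    using transpose_vec_mult_scalar[OF P b, of "P *\<^sub>v a"] P a by simp
  also have "transpose_mat P *\<^sub>v (P *\<^sub>v a) = ?G *\<^sub>v a" using P a by simp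
  also have "(?G *\<^sub>v a) \<bullet> b = (\<Sum>i<n. \<Sum>j<n. ?G $$ (i, j) * a $ j * b $ i)"
    using G a b by (auto simp: scalar_prod_def lessThan_atLeast0 sum_distrib_right intro!: sum.cong)
  finally show ?thesis .
qed

lemma symmetric_eigenbasis_gram_orthogonal:
  fixes S P :: "'a :: comm_ring_1 mat"
  assumes S: "S \<in> carrier_mat n n" and sym: "transpose_mat S = S" and P: "P \<in> carrier_mat n n"
    and SP: "S * P = P * mat_diag n d" and i: "i < n" and j: "j < n"
  shows "(transpose_mat P * P) $$ (i, j) * d j = d i * (transpose_mat P * P) $$ (i, j)"
proof -
  define G where "G = transpose_mat P * P"
  have PT: "transpose_mat P \<in> carrier_mat n n" and G: "G \<in> carrier_mat n n" unfolding G_def using P by auto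
  define M where "M = transpose_mat P * (S * P)"
  have "M = G * mat_diag n d" unfolding M_def SP G_def using PT P by (metis assoc_mult_mat mat_diag_dim)
  hence Mij: "M $$ (i, j) = G $$ (i, j) * d j" if "i < n" "j < n" for i j
    using mat_diag_mult_right[OF G, of d] that by simp
  have "transpose_mat M = transpose_mat (S * P) * P"
    unfolding M_def using transpose_mult[OF PT, of "S * P" n] S P by simp
  also have "\<dots> = M" unfolding M_def transpose_mult[OF S P] sym using PT S P by (simp add: assoc_mult_mat)
  finally have "M $$ (j, i) = M $$ (i, j)"
    using symmetric_mat_entry[of M n i j] i j S P PT unfolding M_def by auto
  moreover have "G $$ (j, i) = G $$ (i, j)" unfolding G_def using P i j by (simp add: comm_scalar_prod[of _ n])
  ultimately show ?thesis using Mij[OF i j] Mij[OF j i] unfolding G_def by (simp add: mult.commute)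
qed

lemma mat_diag_mult_vec:
  assumes "g \<in> carrier_vec n"
  shows "mat_diag n d *\<^sub>v g = vec n (\<lambda>i. d i * g $ i)"
proof (rule eq_vecI)
  fix i assume "i < dim_vec (vec n (\<lambda>i. d i * g $ i))"
  hence i: "i < n" by simp
  have "(mat_diag n d *\<^sub>v g) $ i = (\<Sum>j\<in>{0..<n}. (if i = j then d j else 0) * g $ j)"
    using i assms unfolding mat_diag_def by (simp add: scalar_prod_def)
  also have "\<dots> = (\<Sum>j\<in>{0..<n}. if i = j then d j * g $ j else 0)" by (intro sum.cong) auto
  also have "\<dots> = d i * g $ i" using i by simp
  finally show "(mat_diag n d *\<^sub>v g) $ i = vec n (\<lambda>i. d i * g $ i) $ i" using i by simp
qed (simp add: mat_diag_def)

text \<open>Eigenvectors for distinct eigenvalues are orthogonal, so on combinations of eigenvectors with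
  nonnegative eigenvalues the form is the squared norm of a rescaled combination.\<close>
lemma symmetric_quadratic_form_nonneg:
  fixes S P :: "real mat"
  assumes S: "S \<in> carrier_mat n n" and sym: "transpose_mat S = S" and P: "P \<in> carrier_mat n n"
    and SP: "S * P = P * mat_diag n d" and g: "g \<in> carrier_vec n"
    and g_neg: "\<And>i. i < n \<Longrightarrow> d i < 0 \<Longrightarrow> g $ i = 0"
  shows "(P *\<^sub>v g) \<bullet> (S *\<^sub>v (P *\<^sub>v g)) \<ge> 0"
proof -
  define G where "G = transpose_mat P * P"
  define dg where "dg = vec n (\<lambda>i. d i * g $ i)"
  define h where "h = vec n (\<lambda>i. sqrt (max (d i) 0) * g $ i)"
  have dg: "dg \<in> carrier_vec n" and h: "h \<in> carrier_vec n" unfolding dg_def h_def by auto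
  have "S *\<^sub>v (P *\<^sub>v g) = P *\<^sub>v (mat_diag n d *\<^sub>v g)"
    using S P g by (simp flip: assoc_mult_mat_vec add: SP assoc_mult_mat_vec[OF P mat_diag_dim g])
  hence SPg: "S *\<^sub>v (P *\<^sub>v g) = P *\<^sub>v dg" unfolding dg_def mat_diag_mult_vec[OF g] .
  have entry: "G $$ (i, j) * g $ j * dg $ i = G $$ (i, j) * h $ j * h $ i" if ij: "i < n" "j < n" for i j
  proof (cases "d i < 0 \<or> d j < 0")
    case True
    then show ?thesis using g_neg ij unfolding h_def dg_def by auto
  next
    case False
    show ?thesis
    proof (cases "d i = d j")
      case True
      have "sqrt (d j) * sqrt (d i) = d i" using True False by (simp flip: real_sqrt_mult)
      then show ?thesis using False ij unfolding h_def dg_def by (simp add: algebra_simps)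
    next
      case False
      hence "G $$ (i, j) = 0"
        using symmetric_eigenbasis_gram_orthogonal[OF S sym P SP ij] unfolding G_def
        by (metis mult.commute mult_cancel_left)
      then show ?thesis by simp
    qed
  qed
  have "(P *\<^sub>v g) \<bullet> (S *\<^sub>v (P *\<^sub>v g)) = (\<Sum>i<n. \<Sum>j<n. G $$ (i, j) * g $ j * dg $ i)"
    unfolding SPg G_def by (rule scalar_prod_mult_mat_vec_gram[OF P g dg])
  also have "\<dots> = (\<Sum>i<n. \<Sum>j<n. G $$ (i, j) * h $ j * h $ i)" using entry by (intro sum.cong refl) auto
  also have "\<dots> = (P *\<^sub>v h) \<bullet> (P *\<^sub>v h)" unfolding G_def by (rule scalar_prod_mult_mat_vec_gram[OF P h h, symmetric])
  finally show ?thesis using conjugate_square_ge_0_vec[of "P *\<^sub>v h"] by simp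
qed

lemma smult_mat_mult_vec:
  fixes A :: "'a :: comm_ring_1 mat"
  assumes "A \<in> carrier_mat n m" and "x \<in> carrier_vec m"
  shows "(c \<cdot>\<^sub>m A) *\<^sub>v x = c \<cdot>\<^sub>v (A *\<^sub>v x)"
  using assms by (intro eq_vecI) (auto simp: scalar_prod_def sum_distrib_left ac_simps intro!: sum.cong)

lemma nontrivial_solution_at_most_one_equation:
  fixes a b :: "nat \<Rightarrow> real"
  assumes "finite K" and "card K \<le> 1"
  obtains e1 e2 where "(e1, e2) \<noteq> (0, 0)" and "\<And>i. i \<in> K \<Longrightarrow> e1 * a i + e2 * b i = 0"
proof (cases "K = {}")
  case True
  then show thesis by (intro that[of 1 0]) auto
next
  case False
  then obtain k where "K = {k}" using assms by (auto simp: card_le_Suc0_iff_eq)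
  then show thesis
    by (cases "a k = 0 \<and> b k = 0") (auto intro: that[of 1 0] that[of "b k" "- a k"] simp: mult.commute)
qed

lemma symmetric_plane_meets_nonneg_cone:
  fixes S P Q :: "real mat"
  assumes S: "S \<in> carrier_mat n n" and sym: "transpose_mat S = S"
    and P: "P \<in> carrier_mat n n" and Q: "Q \<in> carrier_mat n n" and PQ: "P * Q = 1\<^sub>m n"
    and SP: "S * P = P * mat_diag n d" and v: "v1 \<in> carrier_vec n" "v2 \<in> carrier_vec n"
    and card_neg: "card {i. i < n \<and> d i < 0} \<le> 1"
  obtains e1 e2 where "(e1, e2) \<noteq> (0, 0)"
    and "(e1 \<cdot>\<^sub>v v1 + e2 \<cdot>\<^sub>v v2) \<bullet> (S *\<^sub>v (e1 \<cdot>\<^sub>v v1 + e2 \<cdot>\<^sub>v v2)) \<ge> 0"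
proof -
  define g1 where "g1 = Q *\<^sub>v v1"
  define g2 where "g2 = Q *\<^sub>v v2"
  have g: "g1 \<in> carrier_vec n" "g2 \<in> carrier_vec n" unfolding g1_def g2_def using Q v by auto
  have Pg: "P *\<^sub>v g1 = v1" "P *\<^sub>v g2 = v2" unfolding g1_def g2_def using P Q v PQ
    by (simp_all flip: assoc_mult_mat_vec)
  have "finite {i. i < n \<and> d i < 0}" by simp
  then obtain e1 e2 where e: "(e1, e2) \<noteq> (0, 0)"
    and e_neg: "\<And>i. i \<in> {i. i < n \<and> d i < 0} \<Longrightarrow> e1 * g1 $ i + e2 * g2 $ i = 0"
    using nontrivial_solution_at_most_one_equation[OF _ card_neg, of "\<lambda>i. g1 $ i" "\<lambda>i. g2 $ i"] by blast
  define g where "g = e1 \<cdot>\<^sub>v g1 + e2 \<cdot>\<^sub>v g2"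
  have "g \<in> carrier_vec n" unfolding g_def using g by simp
  hence "(P *\<^sub>v g) \<bullet> (S *\<^sub>v (P *\<^sub>v g)) \<ge> 0"
    by (rule symmetric_quadratic_form_nonneg[OF S sym P SP]) (use e_neg g in \<open>auto simp: g_def\<close>)
  moreover have "P *\<^sub>v g = e1 \<cdot>\<^sub>v v1 + e2 \<cdot>\<^sub>v v2" unfolding g_def
    using P g Pg by (simp add: mult_add_distrib_mat_vec[OF P] mult_mat_vec[OF P])
  ultimately show thesis using e that by simp
qed

lemma symmetric_plane_meets_nonpos_cone:
  fixes S P Q :: "real mat"
  assumes S: "S \<in> carrier_mat n n" and sym: "transpose_mat S = S"
    and P: "P \<in> carrier_mat n n" and Q: "Q \<in> carrier_mat n n" and PQ: "P * Q = 1\<^sub>m n"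
    and SP: "S * P = P * mat_diag n d" and v: "v1 \<in> carrier_vec n" "v2 \<in> carrier_vec n"
    and card_pos: "card {i. i < n \<and> 0 < d i} \<le> 1"
  obtains e1 e2 where "(e1, e2) \<noteq> (0, 0)"
    and "(e1 \<cdot>\<^sub>v v1 + e2 \<cdot>\<^sub>v v2) \<bullet> (S *\<^sub>v (e1 \<cdot>\<^sub>v v1 + e2 \<cdot>\<^sub>v v2)) \<le> 0"
proof -
  let ?S = "(- 1) \<cdot>\<^sub>m S"
  have S': "?S \<in> carrier_mat n n" using S by simp
  have sym': "transpose_mat ?S = ?S"
    using S by (intro eq_matI) (auto simp: symmetric_mat_entry[OF S sym])
  have "?S * P = (- 1) \<cdot>\<^sub>m (P * mat_diag n d)" using mult_smult_assoc_mat[OF S P] SP by simp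
  also have "\<dots> = P * ((- 1) \<cdot>\<^sub>m mat_diag n d)" using mult_smult_distrib[OF P mat_diag_dim] by simp
  also have "(- 1) \<cdot>\<^sub>m mat_diag n d = mat_diag n (\<lambda>i. - d i)"
    by (rule eq_matI) (auto simp: mat_diag_def)
  finally have SP': "?S * P = P * mat_diag n (\<lambda>i. - d i)" .
  have "card {i. i < n \<and> - d i < 0} \<le> 1" using card_pos by simp
  then obtain e1 e2 where nz: "(e1, e2) \<noteq> (0, 0)"
    and "(e1 \<cdot>\<^sub>v v1 + e2 \<cdot>\<^sub>v v2) \<bullet> (?S *\<^sub>v (e1 \<cdot>\<^sub>v v1 + e2 \<cdot>\<^sub>v v2)) \<ge> 0"
    using symmetric_plane_meets_nonneg_cone[OF S' sym' P Q PQ SP' v] by blast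
  moreover have "e1 \<cdot>\<^sub>v v1 + e2 \<cdot>\<^sub>v v2 \<in> carrier_vec n" using v by simp
  ultimately show thesis
    using that[OF nz] S by (simp add: smult_mat_mult_vec[OF S] scalar_prod_smult_distrib[of _ n])
qed

lemma num_pos_eig_eq_2_of_definite_planes:
  fixes S :: "real mat" and u1 u2 w1 w2 :: "real vec"
  assumes S: "S \<in> carrier_mat 4 4" and sym: "transpose_mat S = S"
    and u: "u1 \<in> carrier_vec 4" "u2 \<in> carrier_vec 4" and w: "w1 \<in> carrier_vec 4" "w2 \<in> carrier_vec 4"
    and pos: "\<And>e1 e2. (e1, e2) \<noteq> (0, 0) \<Longrightarrow>
      (e1 \<cdot>\<^sub>v u1 + e2 \<cdot>\<^sub>v u2) \<bullet> (S *\<^sub>v (e1 \<cdot>\<^sub>v u1 + e2 \<cdot>\<^sub>v u2)) > 0"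
    and neg: "\<And>e1 e2. (e1, e2) \<noteq> (0, 0) \<Longrightarrow>
      (e1 \<cdot>\<^sub>v w1 + e2 \<cdot>\<^sub>v w2) \<bullet> (S *\<^sub>v (e1 \<cdot>\<^sub>v w1 + e2 \<cdot>\<^sub>v w2)) < 0"
  shows "num_pos_eig S = 2"
proof -
  obtain ds where jnf: "jordan_nf S (map (Pair 1) ds)"
    using real_symmetric_jordan_nf_diagonal[OF S sym] .
  obtain P Q where P: "P \<in> carrier_mat 4 4" and Q: "Q \<in> carrier_mat 4 4" and PQ: "P * Q = 1\<^sub>m 4"
    and len: "length ds = 4" and SP: "S * P = P * mat_diag 4 ((!) ds)"
    using jordan_nf_diagonal_eigenbasis[OF S jnf] .
  define Ip where "Ip = {i. i < 4 \<and> 0 < ds ! i}"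
  define In where "In = {i. i < 4 \<and> ds ! i < 0}"
  have "num_pos_eig S = card Ip"
    unfolding num_pos_eig_jordan_nf_diagonal[OF S jnf] length_filter_conv_card Ip_def len ..
  moreover have "card Ip + card In \<le> 4"
  proof -
    have "card Ip + card In = card (Ip \<union> In)" by (rule card_Un_disjoint[symmetric]) (auto simp: Ip_def In_def)
    also have "\<dots> \<le> card {0..<(4::nat)}" by (intro card_mono) (auto simp: Ip_def In_def)
    finally show ?thesis by simp
  qed
  moreover have "\<not> card In \<le> 1"
  proof
    assume "card In \<le> 1"
    then obtain e1 e2 where nz: "(e1, e2) \<noteq> (0, 0)"
      and "(e1 \<cdot>\<^sub>v w1 + e2 \<cdot>\<^sub>v w2) \<bullet> (S *\<^sub>v (e1 \<cdot>\<^sub>v w1 + e2 \<cdot>\<^sub>v w2)) \<ge> 0"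
      using symmetric_plane_meets_nonneg_cone[OF S sym P Q PQ SP w] unfolding In_def by blast
    with neg[OF nz] show False by simp
  qed
  moreover have "\<not> card Ip \<le> 1"
  proof
    assume "card Ip \<le> 1"
    then obtain e1 e2 where nz: "(e1, e2) \<noteq> (0, 0)"
      and "(e1 \<cdot>\<^sub>v u1 + e2 \<cdot>\<^sub>v u2) \<bullet> (S *\<^sub>v (e1 \<cdot>\<^sub>v u1 + e2 \<cdot>\<^sub>v u2)) \<le> 0"
      using symmetric_plane_meets_nonpos_cone[OF S sym P Q PQ SP u] unfolding Ip_def by blast
    with pos[OF nz] show False by simp
  qed
  ultimately show ?thesis by linarith
qed

section \<open>Bilinear forms and Jordan chains\<close>

definition bilinear_form :: "'a :: comm_ring_1 mat \<Rightarrow> 'a vec \<Rightarrow> 'a vec \<Rightarrow> 'a" where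
  "bilinear_form K x y = x \<bullet> (K *\<^sub>v y)"

context
  fixes K :: "'a :: field mat" and n :: nat
  assumes K: "K \<in> carrier_mat n n"
begin

lemma bilinear_form_add_left:
  "x \<in> carrier_vec n \<Longrightarrow> y \<in> carrier_vec n \<Longrightarrow> w \<in> carrier_vec n \<Longrightarrow>
    bilinear_form K (x + y) w = bilinear_form K x w + bilinear_form K y w"
  unfolding bilinear_form_def using K by (simp add: add_scalar_prod_distrib[of _ n])

lemma bilinear_form_add_right:
  "x \<in> carrier_vec n \<Longrightarrow> y \<in> carrier_vec n \<Longrightarrow> w \<in> carrier_vec n \<Longrightarrow>
    bilinear_form K w (x + y) = bilinear_form K w x + bilinear_form K w y"
  unfolding bilinear_form_def using K by (simp add: scalar_prod_add_distrib[of _ n] mult_add_distrib_mat_vec)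

lemma bilinear_form_smult_left:
  "x \<in> carrier_vec n \<Longrightarrow> w \<in> carrier_vec n \<Longrightarrow> bilinear_form K (c \<cdot>\<^sub>v x) w = c * bilinear_form K x w"
  unfolding bilinear_form_def using K by simp

lemma bilinear_form_smult_right:
  "x \<in> carrier_vec n \<Longrightarrow> w \<in> carrier_vec n \<Longrightarrow> bilinear_form K w (c \<cdot>\<^sub>v x) = c * bilinear_form K w x"
  unfolding bilinear_form_def using K by (simp add: mult_mat_vec[OF K])

lemma bilinear_form_symmetric:
  "transpose_mat K = K \<Longrightarrow> x \<in> carrier_vec n \<Longrightarrow> y \<in> carrier_vec n \<Longrightarrow>
    bilinear_form K x y = bilinear_form K y x"
  unfolding bilinear_form_def using scalar_prod_mult_symmetric[OF K] by blast

end

lemma bilinear_form_jordan_chain: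
  fixes KA KB :: "'a :: field mat"
  assumes KA: "KA \<in> carrier_mat n n" and x: "x \<in> carrier_vec n"
    and c0: "c0 \<in> carrier_vec n" and c1: "c1 \<in> carrier_vec n"
    and chain0: "KB *\<^sub>v c0 = z \<cdot>\<^sub>v (KA *\<^sub>v c0)"
    and chain1: "KB *\<^sub>v c1 = z \<cdot>\<^sub>v (KA *\<^sub>v c1) + KA *\<^sub>v c0"
  shows "bilinear_form KB x c0 = z * bilinear_form KA x c0"
    and "bilinear_form KB x c1 = z * bilinear_form KA x c1 + bilinear_form KA x c0"
  unfolding bilinear_form_def chain0 chain1 using KA x c0 c1
  by (simp_all add: scalar_prod_add_distrib[of x n])

lemma jordan_chains_orthogonal:
  fixes KA KB :: "'a :: field mat"
  assumes KA: "KA \<in> carrier_mat n n" and KB: "KB \<in> carrier_mat n n"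
    and KA_sym: "transpose_mat KA = KA" and KB_sym: "transpose_mat KB = KB" and zw: "z \<noteq> w"
    and c: "c0 \<in> carrier_vec n" "c1 \<in> carrier_vec n" "c2 \<in> carrier_vec n" "c3 \<in> carrier_vec n"
    and chain0: "KB *\<^sub>v c0 = z \<cdot>\<^sub>v (KA *\<^sub>v c0)"
    and chain1: "KB *\<^sub>v c1 = z \<cdot>\<^sub>v (KA *\<^sub>v c1) + KA *\<^sub>v c0"
    and chain2: "KB *\<^sub>v c2 = w \<cdot>\<^sub>v (KA *\<^sub>v c2)"
    and chain3: "KB *\<^sub>v c3 = w \<cdot>\<^sub>v (KA *\<^sub>v c3) + KA *\<^sub>v c2"
  shows "bilinear_form KA c0 c0 = 0" and "bilinear_form KA c0 c2 = 0" and "bilinear_form KA c0 c3 = 0"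
    and "bilinear_form KA c1 c2 = 0" and "bilinear_form KA c1 c3 = 0"
proof -
  note z = bilinear_form_jordan_chain[OF KA _ c(1,2) chain0 chain1]
  note w = bilinear_form_jordan_chain[OF KA _ c(3,4) chain2 chain3]
  note sA = bilinear_form_symmetric[OF KA KA_sym] and sB = bilinear_form_symmetric[OF KB KB_sym]
  note zw' = zw zw[symmetric]
  show g00: "bilinear_form KA c0 c0 = 0"
    using z(2)[of c0] z(1)[of c1] sA[of c0 c1] sB[of c0 c1] c by simp
  show g02: "bilinear_form KA c0 c2 = 0"
    using w(1)[of c0] z(1)[of c2] sA[of c0 c2] sB[of c0 c2] c by (simp add: zw')
  show g03: "bilinear_form KA c0 c3 = 0"
    using w(2)[of c0] z(1)[of c3] sA[of c0 c3] sB[of c0 c3] g02 c by (simp add: zw')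
  show g12: "bilinear_form KA c1 c2 = 0"
    using w(1)[of c1] z(2)[of c2] sA[of c1 c2] sA[of c0 c2] sB[of c1 c2] g02 c by (simp add: zw')
  show "bilinear_form KA c1 c3 = 0"
    using w(2)[of c1] z(2)[of c3] sA[of c1 c3] sA[of c0 c3] sB[of c1 c3] g03 g12 c by (simp add: zw')
qed

lemma cnj_bilinear_form_cmat:
  assumes "A \<in> carrier_mat n n" and "x \<in> carrier_vec n" and "y \<in> carrier_vec n"
  shows "bilinear_form (cmat A) (map_vec cnj x) (map_vec cnj y) = cnj (bilinear_form (cmat A) x y)"
  unfolding bilinear_form_def cnj_cmat_mult_vec[OF assms(1,3), symmetric] using assms
  by (intro cnj_scalar_prod[of _ n]) auto

lemma cvec_add:
  assumes "u \<in> carrier_vec n" and "w \<in> carrier_vec n"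
  shows "cvec (u + w) = cvec u + cvec w"
  using assms by (intro eq_vecI) auto

lemma cvec_smult: "cvec (x \<cdot>\<^sub>v u) = complex_of_real x \<cdot>\<^sub>v cvec u"
  by (intro eq_vecI) auto

lemma is_real_vec_iff_cnj:
  "is_real_vec X \<longleftrightarrow> map_vec cnj X = X"
  unfolding is_real_vec_def by (auto simp: vec_eq_iff complex_eq_iff)

lemma cvec_map_Re:
  "is_real_vec X \<Longrightarrow> cvec (map_vec Re X) = X"
  unfolding is_real_vec_def by (intro eq_vecI) (auto simp: complex_eq_iff)

lemma mult_mat_vec_4:
  fixes P :: "'a :: comm_ring_1 mat"
  assumes P: "P \<in> carrier_mat 4 4" and y: "y \<in> carrier_vec 4"
  shows "P *\<^sub>v y = y $ 0 \<cdot>\<^sub>v col P 0 + y $ 1 \<cdot>\<^sub>v col P 1 + y $ 2 \<cdot>\<^sub>v col P 2 + y $ 3 \<cdot>\<^sub>v col P 3"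
proof -
  have "{0..<4::nat} = {0, 1, 2, 3}" by auto
  then show ?thesis using P y by (intro eq_vecI) (auto simp: scalar_prod_def mult.commute)
qed

lemma complex_cube_root:
  fixes w :: complex
  assumes "w \<noteq> 0"
  obtains c where "c \<noteq> 0" and "c ^ 3 = w"
proof -
  obtain c where "poly [:- w, 0, 0, 1:] c = 0"
    using basic_cqe_conv2[of "[:0, 1:]" "- w" 0] by auto
  hence "c ^ 3 = w" by (simp add: power3_eq_cube algebra_simps)
  with assms show thesis by (intro that[of c]) auto
qed

lemma conj_param_image:
  "{f (s + \<i> * t) (s - \<i> * t) | s t. (s, t) \<noteq> (0, 0)} = {f p r | p r. (p, r) \<noteq> (0, 0)}"
proof (rule Set.set_eqI, rule iffI)
  fix X assume "X \<in> {f (s + \<i> * t) (s - \<i> * t) | s t. (s, t) \<noteq> (0, 0)}"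
  then obtain s t where X: "X = f (s + \<i> * t) (s - \<i> * t)" and st: "(s, t) \<noteq> (0, 0)" by blast
  have "(s + \<i> * t, s - \<i> * t) \<noteq> (0, 0)"
  proof
    assume "(s + \<i> * t, s - \<i> * t) = (0, 0)"
    then have h: "s + \<i> * t = 0" "s - \<i> * t = 0" by (metis fst_conv, metis snd_conv)
    have "2 * s = (s + \<i> * t) + (s - \<i> * t)" by simp
    then have "s = 0" unfolding h by simp
    moreover from h(1) this have "t = 0" by simp
    ultimately show False using st by simp
  qed
  with X show "X \<in> {f p r | p r. (p, r) \<noteq> (0, 0)}" by blast
next
  fix X assume "X \<in> {f p r | p r. (p, r) \<noteq> (0, 0)}"
  then obtain p r where X: "X = f p r" and pr: "(p, r) \<noteq> (0, 0)" by blast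
  define s where "s = (p + r) / 2"
  define t where "t = (p - r) / (2 * \<i>)"
  have e: "s + \<i> * t = p" "s - \<i> * t = r" unfolding s_def t_def by (simp_all add: field_simps)
  with pr have "(s, t) \<noteq> (0, 0)" by auto
  moreover have "X = f (s + \<i> * t) (s - \<i> * t)" unfolding X e ..
  ultimately show "X \<in> {f (s + \<i> * t) (s - \<i> * t) | s t. (s, t) \<noteq> (0, 0)}" by blast
qed

section \<open>The chain basis of a Segre [22] pencil\<close>

locale segre_22_chains =
  fixes A B :: "real mat" and z :: complex and b0 b1 :: "complex vec"
  assumes A: "A \<in> carrier_mat 4 4" and B: "B \<in> carrier_mat 4 4"
    and A_sym: "transpose_mat A = A" and B_sym: "transpose_mat B = B"
    and Im_z: "Im z \<noteq> 0"
    and b0: "b0 \<in> carrier_vec 4" and b1: "b1 \<in> carrier_vec 4"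
    and chain0: "cmat B *\<^sub>v b0 = z \<cdot>\<^sub>v (cmat A *\<^sub>v b0)"
    and chain1: "cmat B *\<^sub>v b1 = z \<cdot>\<^sub>v (cmat A *\<^sub>v b1) + cmat A *\<^sub>v b0"
    and nondegenerate: "bilinear_form (cmat A) b0 b1 \<noteq> 0"
begin

abbreviation "fA \<equiv> bilinear_form (cmat A)"
abbreviation "fB \<equiv> bilinear_form (cmat B)"

definition "b2 = map_vec cnj b0"
definition "b3 = map_vec cnj b1"
definition "a01 = fA b0 b1"
definition "a11 = fA b1 b1"

lemma cmat_A_carrier [simp]: "cmat A \<in> carrier_mat 4 4" using A by simp
lemma cmat_B_carrier [simp]: "cmat B \<in> carrier_mat 4 4" using B by simp

lemma chain_carrier [simp]:
  "b0 \<in> carrier_vec 4" "b1 \<in> carrier_vec 4" "b2 \<in> carrier_vec 4" "b3 \<in> carrier_vec 4"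
  using b0 b1 unfolding b2_def b3_def by auto

lemma chain_dim [simp]: "dim_vec b0 = 4" "dim_vec b1 = 4" "dim_vec b2 = 4" "dim_vec b3 = 4"
  using chain_carrier by auto

lemmas fA_bilinear [simp] = bilinear_form_add_left[OF cmat_A_carrier] bilinear_form_add_right[OF cmat_A_carrier]
  bilinear_form_smult_left[OF cmat_A_carrier] bilinear_form_smult_right[OF cmat_A_carrier]

lemma z_neq_cnj: "z \<noteq> cnj z"
  using Im_z by (metis cnj.simps(2) neg_equal_zero)

lemma a01_nonzero: "a01 \<noteq> 0"
  using nondegenerate unfolding a01_def .

lemma fA_sym: "x \<in> carrier_vec 4 \<Longrightarrow> y \<in> carrier_vec 4 \<Longrightarrow> fA x y = fA y x"
  by (rule bilinear_form_symmetric[OF cmat_A_carrier cmat_symmetric[OF A_sym]])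

lemma chain2: "cmat B *\<^sub>v b2 = cnj z \<cdot>\<^sub>v (cmat A *\<^sub>v b2)"
proof -
  have "map_vec cnj (z \<cdot>\<^sub>v (cmat A *\<^sub>v b0)) = cnj z \<cdot>\<^sub>v map_vec cnj (cmat A *\<^sub>v b0)"
    by (intro eq_vecI) auto
  then show ?thesis
    using arg_cong[OF chain0, of "map_vec cnj"]
    unfolding b2_def cnj_cmat_mult_vec[OF A b0] cnj_cmat_mult_vec[OF B b0] by simp
qed

lemma chain3: "cmat B *\<^sub>v b3 = cnj z \<cdot>\<^sub>v (cmat A *\<^sub>v b3) + cmat A *\<^sub>v b2"
proof -
  have "map_vec cnj (z \<cdot>\<^sub>v (cmat A *\<^sub>v b1) + cmat A *\<^sub>v b0)
      = cnj z \<cdot>\<^sub>v map_vec cnj (cmat A *\<^sub>v b1) + map_vec cnj (cmat A *\<^sub>v b0)"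
    by (intro eq_vecI) auto
  then show ?thesis
    using arg_cong[OF chain1, of "map_vec cnj"]
    unfolding b2_def b3_def cnj_cmat_mult_vec[OF A b0] cnj_cmat_mult_vec[OF A b1]
      cnj_cmat_mult_vec[OF B b1] by simp
qed

lemma chain_gram:
  "fA b0 b0 = 0" "fA b0 b2 = 0" "fA b0 b3 = 0" "fA b1 b2 = 0" "fA b1 b3 = 0"
  "fA b2 b2 = 0" "fA b2 b3 = cnj a01" "fA b3 b3 = cnj a11"
proof -
  show g00: "fA b0 b0 = 0" and "fA b0 b2 = 0" "fA b0 b3 = 0" "fA b1 b2 = 0" "fA b1 b3 = 0"
    using jordan_chains_orthogonal[OF cmat_A_carrier cmat_B_carrier cmat_symmetric[OF A_sym] cmat_symmetric[OF B_sym] z_neq_cnj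
        chain_carrier chain0 chain1 chain2 chain3] .
  show "fA b2 b2 = 0" unfolding b2_def cnj_bilinear_form_cmat[OF A b0 b0] g00 by simp
  show "fA b2 b3 = cnj a01" unfolding b2_def b3_def cnj_bilinear_form_cmat[OF A b0 b1] a01_def ..
  show "fA b3 b3 = cnj a11" unfolding b3_def cnj_bilinear_form_cmat[OF A b1 b1] a11_def ..
qed

definition chain_vec :: "complex \<Rightarrow> complex \<Rightarrow> complex \<Rightarrow> complex \<Rightarrow> complex vec" where
  "chain_vec p q r s = p \<cdot>\<^sub>v b0 + q \<cdot>\<^sub>v b1 + r \<cdot>\<^sub>v b2 + s \<cdot>\<^sub>v b3"

lemma chain_vec_carrier [simp]: "chain_vec p q r s \<in> carrier_vec 4"
  unfolding chain_vec_def by simp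

lemma chain_vec_add:
  "chain_vec p q r s + chain_vec p' q' r' s' = chain_vec (p + p') (q + q') (r + r') (s + s')"
  unfolding chain_vec_def by (intro eq_vecI) (auto simp: algebra_simps)

lemma chain_vec_smult: "x \<cdot>\<^sub>v chain_vec p q r s = chain_vec (x * p) (x * q) (x * r) (x * s)"
  unfolding chain_vec_def by (intro eq_vecI) (auto simp: algebra_simps)

lemma fA_chain_vec:
  "fA (chain_vec p q r s) (chain_vec p' q' r' s') =
    a01 * (p * q' + q * p') + a11 * q * q' + cnj a01 * (r * s' + s * r') + cnj a11 * s * s'"
proof -
  have "fA b1 b0 = a01" "fA b2 b0 = 0" "fA b3 b0 = 0" "fA b2 b1 = 0" "fA b3 b1 = 0" "fA b3 b2 = cnj a01"
    using chain_gram fA_sym[of b0 b1] fA_sym[of b0 b2] fA_sym[of b0 b3] fA_sym[of b1 b2] fA_sym[of b1 b3]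
      fA_sym[of b2 b3] unfolding a01_def by auto
  then show ?thesis unfolding chain_vec_def using chain_gram by (simp add: a01_def a11_def algebra_simps)
qed

lemma cmat_B_chain_vec:
  "cmat B *\<^sub>v chain_vec p q r s = cmat A *\<^sub>v chain_vec (z * p + q) (z * q) (cnj z * r + s) (cnj z * s)"
proof -
  have "cmat A *\<^sub>v b0 \<in> carrier_vec 4" "cmat A *\<^sub>v b1 \<in> carrier_vec 4"
    "cmat A *\<^sub>v b2 \<in> carrier_vec 4" "cmat A *\<^sub>v b3 \<in> carrier_vec 4"
    using mult_mat_vec_carrier[OF cmat_A_carrier] by auto
  then show ?thesis unfolding chain_vec_def
    by (simp add: mult_add_distrib_mat_vec[OF cmat_A_carrier] mult_add_distrib_mat_vec[OF cmat_B_carrier]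
        mult_mat_vec[OF cmat_A_carrier] mult_mat_vec[OF cmat_B_carrier] chain0 chain1 chain2 chain3)
       (rule eq_vecI, auto simp: algebra_simps)
qed

lemma fB_chain_vec:
  "fB (chain_vec p q r s) (chain_vec p' q' r' s') =
    fA (chain_vec p q r s) (chain_vec (z * p' + q') (z * q') (cnj z * r' + s') (cnj z * s'))"
  unfolding bilinear_form_def cmat_B_chain_vec ..

lemma chain_vec_inj:
  assumes "chain_vec p q r s = chain_vec p' q' r' s'"
  shows "p = p'" and "q = q'" and "r = r'" and "s = s'"
proof -
  have "a01 * q = a01 * q'" "a01 * p + a11 * q = a01 * p' + a11 * q'"
    "cnj a01 * s = cnj a01 * s'" "cnj a01 * r + cnj a11 * s = cnj a01 * r' + cnj a11 * s'"
    using arg_cong[OF assms, of "fA (chain_vec 1 0 0 0)"] arg_cong[OF assms, of "fA (chain_vec 0 1 0 0)"]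
      arg_cong[OF assms, of "fA (chain_vec 0 0 1 0)"] arg_cong[OF assms, of "fA (chain_vec 0 0 0 1)"]
    unfolding fA_chain_vec by simp_all
  then show "p = p'" "q = q'" "r = r'" "s = s'" using a01_nonzero by auto
qed

lemma chain_vec_eq_0_iff: "chain_vec p q r s = 0\<^sub>v 4 \<longleftrightarrow> p = 0 \<and> q = 0 \<and> r = 0 \<and> s = 0"
proof -
  have "chain_vec 0 0 0 0 = 0\<^sub>v 4" unfolding chain_vec_def by (intro eq_vecI) auto
  then show ?thesis using chain_vec_inj[of p q r s 0 0 0 0] by auto
qed

lemma chain_vec_surj:
  assumes X: "X \<in> carrier_vec 4"
  obtains p q r s where "X = chain_vec p q r s"
proof -
  define T where "T = mat_of_cols 4 [b0, b1, b2, b3]"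
  have T: "T \<in> carrier_mat 4 4" unfolding T_def using mat_of_cols_carrier(1)[of 4 "[b0, b1, b2, b3]"] by (simp add: numeral_eq_Suc)
  have "col T 0 = b0" "col T 1 = b1" "col T 2 = b2" "col T 3 = b3"
    unfolding T_def by (subst col_mat_of_cols; simp)+
  hence T_mult: "T *\<^sub>v y = chain_vec (y $ 0) (y $ 1) (y $ 2) (y $ 3)" if "y \<in> carrier_vec 4" for y
    unfolding mult_mat_vec_4[OF T that] chain_vec_def by simp
  have "det T \<noteq> 0"
  proof
    assume "det T = 0"
    then obtain v where v: "v \<in> carrier_vec 4" "v \<noteq> 0\<^sub>v 4" "T *\<^sub>v v = 0\<^sub>v 4"
      using det_0_iff_vec_prod_zero[OF T] by blast
    hence "v $ 0 = 0 \<and> v $ 1 = 0 \<and> v $ 2 = 0 \<and> v $ 3 = 0" using T_mult chain_vec_eq_0_iff by metis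
    hence "v = 0\<^sub>v 4" using v(1) by (intro eq_vecI) (auto simp: less_Suc_eq numeral_eq_Suc)
    with v show False by simp
  qed
  from det_non_zero_imp_unit[OF T this] obtain T' where T': "T' \<in> carrier_mat 4 4" "T * T' = 1\<^sub>m 4"
    unfolding Units_def ring_mat_def by auto
  have "X = T *\<^sub>v (T' *\<^sub>v X)" using T T' X by (simp flip: assoc_mult_mat_vec)
  also have "\<dots> = chain_vec ((T' *\<^sub>v X) $ 0) ((T' *\<^sub>v X) $ 1) ((T' *\<^sub>v X) $ 2) ((T' *\<^sub>v X) $ 3)"
    using T' X by (intro T_mult) simp
  finally show thesis by (rule that)
qed

lemma cnj_chain_vec: "map_vec cnj (chain_vec p q r s) = chain_vec (cnj r) (cnj s) (cnj p) (cnj q)"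
  unfolding chain_vec_def b2_def b3_def by (intro eq_vecI) auto

lemma is_real_chain_vec_iff: "is_real_vec (chain_vec p q r s) \<longleftrightarrow> r = cnj p \<and> s = cnj q"
  unfolding is_real_vec_iff_cnj cnj_chain_vec using chain_vec_inj by fastforce

section \<open>The index sequence\<close>

lemma pencil_form_chain_vec:
  "of_real l * fA (chain_vec p q r s) (chain_vec p q r s) - fB (chain_vec p q r s) (chain_vec p q r s) =
   2 * a01 * (of_real l - z) * p * q + ((of_real l - z) * a11 - a01) * q^2
   + 2 * cnj a01 * (of_real l - cnj z) * r * s + ((of_real l - cnj z) * cnj a11 - cnj a01) * s^2"
  unfolding fB_chain_vec fA_chain_vec by (simp add: algebra_simps power2_eq_square)

lemma cvec_pencil_form:
  assumes x: "x \<in> carrier_vec 4"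
  shows "of_real (x \<bullet> ((l \<cdot>\<^sub>m A - B) *\<^sub>v x)) = of_real l * fA (cvec x) (cvec x) - fB (cvec x) (cvec x)"
proof -
  have "complex_of_real (x \<bullet> ((l \<cdot>\<^sub>m A - B) *\<^sub>v x))
      = (\<Sum>i<4. \<Sum>j<4. of_real (x $ i) * (of_real l * of_real (A $$ (i, j)) - of_real (B $$ (i, j))) * of_real (x $ j))"
    using x A B by (simp add: scalar_prod_def lessThan_atLeast0 sum_distrib_left algebra_simps)
  also have "\<dots> = of_real l * fA (cvec x) (cvec x) - fB (cvec x) (cvec x)"
    unfolding bilinear_form_def using x A B
    by (simp add: scalar_prod_def lessThan_atLeast0 sum_distrib_left sum_distrib_right algebra_simps sum_subtractf)
  finally show ?thesis .
qed

text \<open>A real point has chain coordinates \<open>(p, w, cnj p, cnj w)\<close>, where the form of \<open>l A - B\<close> is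
  twice the real part of \<open>2 a01 (l - z) p w + ((l - z) a11 - a01) w\<^sup>2\<close>. The choice of \<open>p\<close> as
  the real-linear function \<open>pe w\<close> below turns this into \<open>2 \<epsilon> |w|\<^sup>2\<close>.\<close>
lemma pencil_form_scaled_plane:
  fixes l \<epsilon> :: real
  obtains v1 v2 where "v1 \<in> carrier_vec 4" and "v2 \<in> carrier_vec 4"
    and "\<And>e1 e2. (e1 \<cdot>\<^sub>v v1 + e2 \<cdot>\<^sub>v v2) \<bullet> ((l \<cdot>\<^sub>m A - B) *\<^sub>v (e1 \<cdot>\<^sub>v v1 + e2 \<cdot>\<^sub>v v2))
      = 2 * \<epsilon> * (e1^2 + e2^2)"
proof -
  define u where "u = of_real l - z"
  have u: "u \<noteq> 0" unfolding u_def using Im_z by (metis Im_complex_of_real right_minus_eq)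
  have cnj_u: "cnj u = of_real l - cnj z" unfolding u_def by simp
  define pe where "pe w = (of_real \<epsilon> * cnj w - (u * a11 - a01) * w) / (2 * a01 * u)" for w
  define X where "X w = chain_vec (pe w) w (cnj (pe w)) (cnj w)" for w
  have X_real: "cvec (map_vec Re (X w)) = X w" for w
    unfolding X_def by (rule cvec_map_Re) (simp add: is_real_chain_vec_iff)
  define v1 where "v1 = map_vec Re (X 1)"
  define v2 where "v2 = map_vec Re (X \<i>)"
  have v: "v1 \<in> carrier_vec 4" "v2 \<in> carrier_vec 4" unfolding v1_def v2_def X_def by auto
  have form_X: "of_real l * fA (X w) (X w) - fB (X w) (X w) = 2 * of_real \<epsilon> * w * cnj w" for w
    unfolding X_def pencil_form_chain_vec u_def[symmetric] cnj_u[symmetric] pe_def using a01_nonzero u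
    by (simp add: field_simps power2_eq_square)
  have X_lin: "cvec (e1 \<cdot>\<^sub>v v1 + e2 \<cdot>\<^sub>v v2) = X (of_real e1 + \<i> * of_real e2)" for e1 e2
  proof -
    have "cvec (e1 \<cdot>\<^sub>v v1 + e2 \<cdot>\<^sub>v v2) = of_real e1 \<cdot>\<^sub>v cvec v1 + of_real e2 \<cdot>\<^sub>v cvec v2"
      using v by (simp add: cvec_add[of _ 4] cvec_smult)
    also have "\<dots> = of_real e1 \<cdot>\<^sub>v X 1 + of_real e2 \<cdot>\<^sub>v X \<i>" unfolding v1_def v2_def X_real ..
    also have "\<dots> = X (of_real e1 + \<i> * of_real e2)"
      unfolding X_def chain_vec_def pe_def using a01_nonzero u
      by (intro eq_vecI) (auto simp: field_simps)
    finally show ?thesis .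
  qed
  show thesis
  proof (rule that[OF v])
    fix e1 e2 :: real
    let ?x = "e1 \<cdot>\<^sub>v v1 + e2 \<cdot>\<^sub>v v2"
    have "complex_of_real (?x \<bullet> ((l \<cdot>\<^sub>m A - B) *\<^sub>v ?x))
        = 2 * of_real \<epsilon> * (of_real e1 + \<i> * of_real e2) * cnj (of_real e1 + \<i> * of_real e2)"
      using v by (simp add: cvec_pencil_form X_lin form_X)
    also have "\<dots> = complex_of_real (2 * \<epsilon> * (e1^2 + e2^2))"
      by (simp add: complex_eq_iff power2_eq_square algebra_simps)
    finally show "?x \<bullet> ((l \<cdot>\<^sub>m A - B) *\<^sub>v ?x) = 2 * \<epsilon> * (e1^2 + e2^2)" by (simp only: of_real_eq_iff)
  qed
qed

lemma Id_idx_eq_2: "Id_idx A B l = 2"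
proof -
  let ?S = "l \<cdot>\<^sub>m A - B"
  have S: "?S \<in> carrier_mat 4 4" by (rule minus_carrier_mat[OF B])
  have sym: "transpose_mat ?S = ?S"
    using A B by (intro eq_matI) (auto simp: symmetric_mat_entry[OF A A_sym] symmetric_mat_entry[OF B B_sym])
  obtain u1 u2 where u: "u1 \<in> carrier_vec 4" "u2 \<in> carrier_vec 4"
    and u_form: "\<And>e1 e2. (e1 \<cdot>\<^sub>v u1 + e2 \<cdot>\<^sub>v u2) \<bullet> (?S *\<^sub>v (e1 \<cdot>\<^sub>v u1 + e2 \<cdot>\<^sub>v u2))
      = 2 * 1 * (e1^2 + e2^2)"
    using pencil_form_scaled_plane[of l 1] by blast
  obtain w1 w2 where w: "w1 \<in> carrier_vec 4" "w2 \<in> carrier_vec 4"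
    and w_form: "\<And>e1 e2. (e1 \<cdot>\<^sub>v w1 + e2 \<cdot>\<^sub>v w2) \<bullet> (?S *\<^sub>v (e1 \<cdot>\<^sub>v w1 + e2 \<cdot>\<^sub>v w2))
      = 2 * (-1) * (e1^2 + e2^2)"
    using pencil_form_scaled_plane[of l "-1"] by blast
  have "num_pos_eig ?S = 2"
  proof (rule num_pos_eig_eq_2_of_definite_planes[OF S sym u w])
    fix e1 e2 :: real
    assume "(e1, e2) \<noteq> (0, 0)"
    then have "e1^2 + e2^2 > 0" by (simp add: sum_power2_gt_zero_iff)
    then show "(e1 \<cdot>\<^sub>v u1 + e2 \<cdot>\<^sub>v u2) \<bullet> (?S *\<^sub>v (e1 \<cdot>\<^sub>v u1 + e2 \<cdot>\<^sub>v u2)) > 0"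
      and "(e1 \<cdot>\<^sub>v w1 + e2 \<cdot>\<^sub>v w2) \<bullet> (?S *\<^sub>v (e1 \<cdot>\<^sub>v w1 + e2 \<cdot>\<^sub>v w2)) < 0"
      unfolding u_form w_form by simp_all
  qed
  thus ?thesis unfolding Id_idx_def .
qed

section \<open>The intersection curve\<close>

definition "dz = z - cnj z"

text \<open>The quadratic forms of \<open>B - cnj z A\<close> and \<open>B - z A\<close> in chain coordinates.\<close>
definition "F_cnj p q s = 2 * a01 * dz * p * q + (dz * a11 + a01) * q^2 + cnj a01 * s^2"
definition "F_z q r s = - 2 * cnj a01 * dz * r * s + (cnj a01 - dz * cnj a11) * s^2 + a01 * q^2"

definition "alpha1 = - cnj a01 / (2 * a01 * dz)"
definition "alpha2 = - (dz * a11 + a01) / (2 * a01 * dz)"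

text \<open>For \<open>q = \<sigma>\<^sup>2 \<tau>\<close> and \<open>s = \<sigma> \<tau>\<^sup>2\<close>, the coordinates \<open>p\<close> and \<open>r\<close> solve
  \<open>F_cnj p q s = 0\<close> and \<open>F_z q r s = 0\<close>.\<close>
definition cubic_point :: "complex \<Rightarrow> complex \<Rightarrow> complex vec" where
  "cubic_point \<sigma> \<tau> = chain_vec (alpha1 * \<tau>^3 + alpha2 * \<sigma>^2 * \<tau>) (\<sigma>^2 * \<tau>)
     (cnj alpha1 * \<sigma>^3 + cnj alpha2 * \<sigma> * \<tau>^2) (\<sigma> * \<tau>^2)"

lemma dz_nonzero: "dz \<noteq> 0"
  unfolding dz_def using z_neq_cnj by simp

lemma cnj_dz: "cnj dz = - dz"
  unfolding dz_def by simp

lemma alpha1_nonzero: "alpha1 \<noteq> 0"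
  unfolding alpha1_def using a01_nonzero dz_nonzero by simp

lemma fB_chain_vec_cnj:
  "fB (chain_vec p q r s) (chain_vec p q r s) = cnj z * fA (chain_vec p q r s) (chain_vec p q r s) + F_cnj p q s"
  unfolding fB_chain_vec fA_chain_vec F_cnj_def dz_def by (simp add: algebra_simps power2_eq_square)

lemma fB_chain_vec_z:
  "fB (chain_vec p q r s) (chain_vec p q r s) = z * fA (chain_vec p q r s) (chain_vec p q r s) + F_z q r s"
  unfolding fB_chain_vec fA_chain_vec F_z_def dz_def by (simp add: algebra_simps power2_eq_square)

lemma qsic_chain_vec_iff:
  "chain_vec p q r s \<in> qsic A B \<longleftrightarrow> (p, q, r, s) \<noteq> (0, 0, 0, 0) \<and> F_cnj p q s = 0 \<and> F_z q r s = 0"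
proof -
  let ?X = "chain_vec p q r s"
  have "?X \<in> qsic A B \<longleftrightarrow> ?X \<noteq> 0\<^sub>v 4 \<and> fA ?X ?X = 0 \<and> fB ?X ?X = 0"
    unfolding qsic_def bilinear_form_def by simp
  moreover have "fA ?X ?X = 0 \<and> fB ?X ?X = 0 \<longleftrightarrow> F_cnj p q s = 0 \<and> F_z q r s = 0"
  proof
    assume "fA ?X ?X = 0 \<and> fB ?X ?X = 0"
    then show "F_cnj p q s = 0 \<and> F_z q r s = 0"
      using fB_chain_vec_cnj[of p q r s] fB_chain_vec_z[of p q r s] by (metis add.left_neutral mult_zero_right)
  next
    assume F: "F_cnj p q s = 0 \<and> F_z q r s = 0"
    then have "cnj z * fA ?X ?X = z * fA ?X ?X"
      using fB_chain_vec_cnj[of p q r s] fB_chain_vec_z[of p q r s] by (metis add.right_neutral)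
    then have "fA ?X ?X = 0" using z_neq_cnj by (metis mult_cancel_right)
    then show "fA ?X ?X = 0 \<and> fB ?X ?X = 0" using F fB_chain_vec_cnj[of p q r s] by simp
  qed
  ultimately show ?thesis unfolding chain_vec_eq_0_iff by auto
qed

lemma qsic_cubic_point:
  assumes "(s, t) \<noteq> (0, 0)"
  shows "cubic_point s t \<in> qsic A B"
  unfolding cubic_point_def qsic_chain_vec_iff F_cnj_def F_z_def alpha1_def alpha2_def
  using assms a01_nonzero dz_nonzero alpha1_nonzero
  by (auto simp: field_simps power2_eq_square power3_eq_cube cnj_dz)

lemma chain_vec_on_cubic:
  assumes q: "q \<noteq> 0" and F1: "F_cnj p q s = 0" and F2: "F_z q r s = 0"
  obtains \<sigma> \<tau> where "(\<sigma>, \<tau>) \<noteq> (0, 0)" and "chain_vec p q r s = cubic_point \<sigma> \<tau>"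
proof -
  have a: "a01 \<noteq> 0" "cnj a01 \<noteq> 0" using a01_nonzero by auto
  have s: "s \<noteq> 0"
  proof
    assume "s = 0"
    with F2 a have "q = 0" unfolding F_z_def by simp
    with q show False ..
  qed
  obtain c where c: "c \<noteq> 0" "c ^ 3 = q * s" using complex_cube_root[of "q * s"] q s by auto
  define \<sigma> where "\<sigma> = q / c"
  define \<tau> where "\<tau> = s / c"
  have c3: "c * c * c = q * s" using c by (simp add: power3_eq_cube)
  have e1: "\<sigma>^2 * \<tau> = q" and e2: "\<sigma> * \<tau>^2 = s"
    unfolding \<sigma>_def \<tau>_def using c c3 q s by (simp_all add: field_simps power2_eq_square)
  have t3: "\<tau>^3 = s^2 / q" and s3: "\<sigma>^3 = q^2 / s"
    unfolding \<sigma>_def \<tau>_def using c c3 q s by (simp_all add: field_simps power2_eq_square power3_eq_cube)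
  have "2 * a01 * dz * q * p = - ((dz * a11 + a01) * q^2 + cnj a01 * s^2)"
    using F1 unfolding F_cnj_def by (simp add: algebra_simps eq_neg_iff_add_eq_0)
  then have "p = - ((dz * a11 + a01) * q^2 + cnj a01 * s^2) / (2 * a01 * dz * q)"
    using a dz_nonzero q by (simp add: field_simps)
  also have "\<dots> = alpha1 * (s^2 / q) + alpha2 * q"
    unfolding alpha1_def alpha2_def using a dz_nonzero q by (simp add: field_simps power2_eq_square)
  finally have e3: "alpha1 * \<tau>^3 + alpha2 * \<sigma>^2 * \<tau> = p" unfolding t3 e1[symmetric] by (simp add: mult.assoc)
  have "2 * cnj a01 * dz * s * r = (cnj a01 - dz * cnj a11) * s^2 + a01 * q^2"
    using F2 unfolding F_z_def by (simp add: algebra_simps)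
  then have "r = ((cnj a01 - dz * cnj a11) * s^2 + a01 * q^2) / (2 * cnj a01 * dz * s)"
    using a dz_nonzero s by (simp add: field_simps)
  also have "\<dots> = cnj alpha1 * (q^2 / s) + cnj alpha2 * s"
    unfolding alpha1_def alpha2_def using a dz_nonzero s by (simp add: field_simps power2_eq_square cnj_dz)
  finally have e4: "cnj alpha1 * \<sigma>^3 + cnj alpha2 * \<sigma> * \<tau>^2 = r" unfolding s3 e2[symmetric] by (simp add: mult.assoc)
  have "chain_vec p q r s = cubic_point \<sigma> \<tau>" unfolding cubic_point_def e1 e2 e3 e4 ..
  moreover have "(\<sigma>, \<tau>) \<noteq> (0, 0)" unfolding \<sigma>_def using q c by simp
  ultimately show thesis by (rule that[rotated])
qed

definition real_point :: "complex \<Rightarrow> complex \<Rightarrow> real vec" where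
  "real_point w0 w1 = map_vec Re (chain_vec w0 w1 (cnj w0) (cnj w1))"

lemma cvec_real_point: "cvec (real_point w0 w1) = chain_vec w0 w1 (cnj w0) (cnj w1)"
  unfolding real_point_def by (rule cvec_map_Re) (simp add: is_real_chain_vec_iff)

lemma real_point_carrier [simp]: "real_point w0 w1 \<in> carrier_vec 4"
  unfolding real_point_def by simp

lemma real_point_add: "real_point a b + real_point c d = real_point (a + c) (b + d)"
proof -
  have "cvec (real_point a b + real_point c d) = cvec (real_point (a + c) (b + d))"
    by (simp add: cvec_add[of _ 4] cvec_real_point chain_vec_add)
  then show ?thesis by (rule of_real_hom.vec_hom_inj)
qed

lemma real_point_smult: "x \<cdot>\<^sub>v real_point a b = real_point (of_real x * a) (of_real x * b)"
proof -
  have "cvec (x \<cdot>\<^sub>v real_point a b) = cvec (real_point (of_real x * a) (of_real x * b))"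
    by (simp add: cvec_smult cvec_real_point chain_vec_smult)
  then show ?thesis by (rule of_real_hom.vec_hom_inj)
qed

lemma real_point_eq_0_iff: "real_point a b = 0\<^sub>v 4 \<longleftrightarrow> a = 0 \<and> b = 0"
proof -
  have "real_point a b = 0\<^sub>v 4 \<longleftrightarrow> cvec (real_point a b) = cvec (0\<^sub>v 4)"
    using of_real_hom.vec_hom_inj by auto
  also have "cvec (0\<^sub>v 4) = 0\<^sub>v 4" by auto
  finally show ?thesis unfolding cvec_real_point chain_vec_eq_0_iff by auto
qed

definition "line_P = real_point 1 0"
definition "line_Q = real_point \<i> 0"

text \<open>The coefficients of \<open>s\<^sup>3, s\<^sup>2 t, s t\<^sup>2, t\<^sup>3\<close> in \<open>cubic_point (s + \<i> t) (s - \<i> t)\<close>.\<close>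
definition "cubic_M0 = real_point (alpha1 + alpha2) 1"
definition "cubic_M1 = real_point (\<i> * (alpha2 - 3 * alpha1)) \<i>"
definition "cubic_M2 = real_point (alpha2 - 3 * alpha1) 1"
definition "cubic_M3 = real_point (\<i> * (alpha1 + alpha2)) \<i>"

lemma line_param: "s \<cdot>\<^sub>v cvec line_P + t \<cdot>\<^sub>v cvec line_Q = chain_vec (s + \<i> * t) 0 (s - \<i> * t) 0"
  unfolding line_P_def line_Q_def cvec_real_point chain_vec_smult chain_vec_add by (simp add: algebra_simps)

lemma cubic_param:
  "(s^3) \<cdot>\<^sub>v cvec cubic_M0 + (s^2 * t) \<cdot>\<^sub>v cvec cubic_M1 + (s * t^2) \<cdot>\<^sub>v cvec cubic_M2
     + (t^3) \<cdot>\<^sub>v cvec cubic_M3 = cubic_point (s + \<i> * t) (s - \<i> * t)"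
  unfolding cubic_M0_def cubic_M1_def cubic_M2_def cubic_M3_def cvec_real_point chain_vec_smult chain_vec_add cubic_point_def
  by (intro arg_cong4[where f = chain_vec]) (simp_all add: algebra_simps power2_eq_square power3_eq_cube)

lemma proj_line_chain: "proj_line line_P line_Q = {chain_vec p 0 r 0 | p r. (p, r) \<noteq> (0, 0)}"
  unfolding proj_line_def line_param using conj_param_image[of "\<lambda>p r. chain_vec p 0 r 0"] by simp

lemma proj_cubic_chain:
  "proj_cubic cubic_M0 cubic_M1 cubic_M2 cubic_M3 = {cubic_point s t | s t. (s, t) \<noteq> (0, 0)}"
  unfolding proj_cubic_def cubic_param using conj_param_image[of cubic_point] by simp

lemma qsic_decomposition: "qsic A B = proj_line line_P line_Q \<union> proj_cubic cubic_M0 cubic_M1 cubic_M2 cubic_M3"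
proof (rule Set.set_eqI, rule iffI)
  fix X assume X: "X \<in> qsic A B"
  then obtain p q r s where X_chain: "X = chain_vec p q r s"
    using chain_vec_surj unfolding qsic_def by blast
  from X have "chain_vec p q r s \<in> qsic A B" unfolding X_chain .
  then have nz: "(p, q, r, s) \<noteq> (0, 0, 0, 0)" and F1: "F_cnj p q s = 0" and F2: "F_z q r s = 0"
    unfolding qsic_chain_vec_iff by auto
  show "X \<in> proj_line line_P line_Q \<union> proj_cubic cubic_M0 cubic_M1 cubic_M2 cubic_M3"
  proof (cases "q = 0")
    case True
    with F1 a01_nonzero have "s = 0" unfolding F_cnj_def by simp
    with True nz X_chain show ?thesis unfolding proj_line_chain by auto
  next
    case False
    then obtain s' t' where "(s', t') \<noteq> (0, 0)" "X = cubic_point s' t'"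
      using chain_vec_on_cubic[OF _ F1 F2] X_chain by metis
    then show ?thesis unfolding proj_cubic_chain by blast
  qed
next
  fix X assume "X \<in> proj_line line_P line_Q \<union> proj_cubic cubic_M0 cubic_M1 cubic_M2 cubic_M3"
  then show "X \<in> qsic A B"
    unfolding proj_line_chain proj_cubic_chain
    by (auto simp: qsic_chain_vec_iff F_cnj_def F_z_def intro: qsic_cubic_point)
qed

lemma real_line_proj_line: "real_line (proj_line line_P line_Q)"
  unfolding real_line_def
proof (intro exI conjI allI impI)
  fix x y :: real assume "x \<cdot>\<^sub>v line_P + y \<cdot>\<^sub>v line_Q = 0\<^sub>v 4"
  then have "complex_of_real x + \<i> * complex_of_real y = 0"
    unfolding line_P_def line_Q_def real_point_smult real_point_add real_point_eq_0_iff by (simp add: mult.commute)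
  then show "x = 0" and "y = 0" by (simp_all add: complex_eq_iff)
qed (simp_all add: line_P_def line_Q_def)

lemma cubic_coefficients_independent:
  assumes "x0 \<cdot>\<^sub>v cubic_M0 + x1 \<cdot>\<^sub>v cubic_M1 + x2 \<cdot>\<^sub>v cubic_M2 + x3 \<cdot>\<^sub>v cubic_M3 = 0\<^sub>v 4"
  shows "x0 = 0 \<and> x1 = 0 \<and> x2 = 0 \<and> x3 = 0"
proof -
  let ?x = "complex_of_real"
  from assms have w0: "?x x0 * (alpha1 + alpha2) + ?x x1 * (\<i> * (alpha2 - 3 * alpha1))
      + ?x x2 * (alpha2 - 3 * alpha1) + ?x x3 * (\<i> * (alpha1 + alpha2)) = 0"
    and w1: "?x x0 + ?x x1 * \<i> + ?x x2 + ?x x3 * \<i> = 0"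
    unfolding cubic_M0_def cubic_M1_def cubic_M2_def cubic_M3_def real_point_smult real_point_add
      real_point_eq_0_iff by simp_all
  from w1 have x2: "x2 = - x0" and x3: "x3 = - x1" by (simp_all add: complex_eq_iff)
  from w0 have "4 * alpha1 * (?x x0 - \<i> * ?x x1) = 0" unfolding x2 x3 by (simp add: algebra_simps)
  then have "?x x0 - \<i> * ?x x1 = 0" using alpha1_nonzero by simp
  then have "x0 = 0" "x1 = 0" by (simp_all add: complex_eq_iff)
  with x2 x3 show ?thesis by simp
qed

lemma space_cubic_proj_cubic: "space_cubic (proj_cubic cubic_M0 cubic_M1 cubic_M2 cubic_M3)"
  unfolding space_cubic_def
proof (intro exI conjI)
  show M: "cubic_M0 \<in> carrier_vec 4" "cubic_M1 \<in> carrier_vec 4" "cubic_M2 \<in> carrier_vec 4" "cubic_M3 \<in> carrier_vec 4"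
    unfolding cubic_M0_def cubic_M1_def cubic_M2_def cubic_M3_def by simp_all
  let ?M = "mat_of_cols 4 [cubic_M0, cubic_M1, cubic_M2, cubic_M3]"
  have M_carrier: "?M \<in> carrier_mat 4 4"
    using mat_of_cols_carrier(1)[of 4 "[cubic_M0, cubic_M1, cubic_M2, cubic_M3]"] by (simp add: numeral_eq_Suc)
  have col: "col ?M 0 = cubic_M0" "col ?M 1 = cubic_M1" "col ?M 2 = cubic_M2" "col ?M 3 = cubic_M3"
    using M by (subst col_mat_of_cols; simp)+
  show "det ?M \<noteq> 0"
  proof
    assume "det ?M = 0"
    then obtain v where v: "v \<in> carrier_vec 4" "v \<noteq> 0\<^sub>v 4" "?M *\<^sub>v v = 0\<^sub>v 4"
      using det_0_iff_vec_prod_zero[OF M_carrier] by blast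
    then have "v $ 0 = 0 \<and> v $ 1 = 0 \<and> v $ 2 = 0 \<and> v $ 3 = 0"
      using cubic_coefficients_independent unfolding mult_mat_vec_4[OF M_carrier v(1)] col by blast
    then have "v = 0\<^sub>v 4" using v(1) by (intro eq_vecI) (auto simp: less_Suc_eq numeral_eq_Suc)
    with v(2) show False ..
  qed
qed rule

lemma no_real_intersection:
  assumes "X \<in> proj_line line_P line_Q \<inter> proj_cubic cubic_M0 cubic_M1 cubic_M2 cubic_M3"
  shows "\<not> is_real_vec X"
proof
  assume real: "is_real_vec X"
  from assms obtain p r where X_line: "X = chain_vec p 0 r 0" unfolding proj_line_chain by blast
  from assms obtain s t where X_cubic: "X = cubic_point s t" and st: "(s, t) \<noteq> (0, 0)"
    unfolding proj_cubic_chain by blast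
  from X_line X_cubic have p: "p = alpha1 * t^3 + alpha2 * s^2 * t" and "0 = s^2 * t"
    and r: "r = cnj alpha1 * s^3 + cnj alpha2 * s * t^2"
    unfolding cubic_point_def by (auto dest: chain_vec_inj)
  then have "s = 0 \<or> t = 0" by simp
  moreover from real X_line have "r = cnj p" using is_real_chain_vec_iff by simp
  ultimately show False using p r st alpha1_nonzero by auto
qed

lemma qsic_real_line_and_cubic:
  "\<exists>L C. real_line L \<and> space_cubic C \<and> qsic A B = L \<union> C \<and> (\<forall>X \<in> L \<inter> C. \<not> is_real_vec X)"
  using real_line_proj_line space_cubic_proj_cubic qsic_decomposition no_real_intersection by blast

end

section \<open>Existence of the chain basis\<close>

lemma jordan_matrix_22:
  "jordan_matrix [(2, z), (2, w)] = mat 4 4 (\<lambda>(i, j). if i = j then (if i < 2 then z else w)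
     else if (i, j) = (0, 1) \<or> (i, j) = (2, 3) then 1 else (0 :: 'a :: {zero, one}))"
  by (rule eq_matI) (auto simp: jordan_matrix_def)

lemma jordan_nf_22_chains:
  fixes M :: "'a :: comm_ring_1 mat"
  assumes M: "M \<in> carrier_mat 4 4" and jnf: "jordan_nf M [(2, z), (2, w)]"
  obtains P Q where "P \<in> carrier_mat 4 4" and "Q \<in> carrier_mat 4 4" and "P * Q = 1\<^sub>m 4" and "Q * P = 1\<^sub>m 4"
    and "M *\<^sub>v col P 0 = z \<cdot>\<^sub>v col P 0" and "M *\<^sub>v col P 1 = z \<cdot>\<^sub>v col P 1 + col P 0"
    and "M *\<^sub>v col P 2 = w \<cdot>\<^sub>v col P 2" and "M *\<^sub>v col P 3 = w \<cdot>\<^sub>v col P 3 + col P 2"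
proof -
  let ?J = "jordan_matrix [(2, z), (2, w)]"
  from jnf obtain P Q where wit: "similar_mat_wit M ?J P Q" unfolding jordan_nf_def similar_mat_def by blast
  note PQ = similar_mat_witD2(1)[OF M wit] and QP = similar_mat_witD2(2)[OF M wit]
    and MPJQ = similar_mat_witD2(3)[OF M wit] and J = similar_mat_witD2(5)[OF M wit]
    and P = similar_mat_witD2(6)[OF M wit] and Q = similar_mat_witD2(7)[OF M wit]
  have "M * P = P * ?J * (Q * P)" unfolding MPJQ using P Q J by (meson assoc_mult_mat mult_carrier_mat)
  also have "\<dots> = P * ?J" unfolding QP using P J by (metis mult_carrier_mat right_mult_one_mat)
  finally have MP: "M * P = P * ?J" .
  have M_col: "M *\<^sub>v col P k = (col ?J k) $ 0 \<cdot>\<^sub>v col P 0 + (col ?J k) $ 1 \<cdot>\<^sub>v col P 1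
      + (col ?J k) $ 2 \<cdot>\<^sub>v col P 2 + (col ?J k) $ 3 \<cdot>\<^sub>v col P 3" if k: "k < 4" for k
  proof -
    have "M *\<^sub>v col P k = col (M * P) k" by (rule col_mult2[OF M P k, symmetric])
    also have "\<dots> = P *\<^sub>v col ?J k" unfolding MP by (rule col_mult2[OF P J k])
    also have "\<dots> = (col ?J k) $ 0 \<cdot>\<^sub>v col P 0 + (col ?J k) $ 1 \<cdot>\<^sub>v col P 1
        + (col ?J k) $ 2 \<cdot>\<^sub>v col P 2 + (col ?J k) $ 3 \<cdot>\<^sub>v col P 3"
      using J k by (intro mult_mat_vec_4[OF P]) simp
    finally show ?thesis .
  qed
  have "col P k \<in> carrier_vec 4" for k using P col_dim[of P k] by (simp add: carrier_matD)
  then show thesis using P Q PQ QP M_col[of 0] M_col[of 1] M_col[of 2] M_col[of 3]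
    by (intro that[of P Q]) (auto simp: jordan_matrix_22 vec_eq_iff carrier_matD[OF P])
qed

lemma mult_mat_vec_zero:
  assumes "A \<in> carrier_mat nr n"
  shows "A *\<^sub>v 0\<^sub>v n = 0\<^sub>v nr"
  using assms by (intro eq_vecI) (auto simp: scalar_prod_def)

lemma vec_zero_if_orthogonal_to_cols:
  fixes P :: "'a :: field mat"
  assumes P: "P \<in> carrier_mat n n" and Q: "Q \<in> carrier_mat n n" and PQ: "P * Q = 1\<^sub>m n"
    and y: "y \<in> carrier_vec n" and orth: "\<And>k. k < n \<Longrightarrow> col P k \<bullet> y = 0"
  shows "y = 0\<^sub>v n"
proof -
  have PT_y: "transpose_mat P *\<^sub>v y = 0\<^sub>v n" using P y orth by (intro eq_vecI) auto
  have "y = transpose_mat (P * Q) *\<^sub>v y" unfolding PQ using y by simp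
  also have "\<dots> = transpose_mat Q *\<^sub>v (transpose_mat P *\<^sub>v y)"
    using P Q y by (simp add: transpose_mult[OF P Q])
  also have "\<dots> = 0\<^sub>v n" unfolding PT_y using Q by (simp add: mult_mat_vec_zero)
  finally show ?thesis .
qed

lemma cmat_invertible_mult_vec_eq_0:
  assumes A: "A \<in> carrier_mat n n" and inv: "invertible_mat A"
    and x: "x \<in> carrier_vec n" and Ax: "cmat A *\<^sub>v x = 0\<^sub>v n"
  shows "x = 0\<^sub>v n"
proof -
  from inv A obtain A' where A': "A' \<in> carrier_mat n n" "A' * A = 1\<^sub>m n"
    unfolding invertible_mat_def inverts_mat_def square_mat.simps
    by (metis carrier_matD carrier_matI index_mult_mat(2,3) index_one_mat(2,3))
  have "cmat A' * cmat A = 1\<^sub>m n" using of_real_hom.mat_hom_mult[OF A'(1) A, symmetric] A'(2)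
    by (simp add: of_real_hom.mat_hom_one)
  then have "x = cmat A' *\<^sub>v (cmat A *\<^sub>v x)" using A A' x by (metis assoc_mult_mat_vec map_carrier_mat one_mult_mat_vec)
  then show ?thesis unfolding Ax using A' by (simp add: mult_mat_vec_zero)
qed

text \<open>Otherwise \<open>A\<close> times the \<open>i\<close>-th basis vector would be orthogonal to the whole basis.\<close>
lemma bilinear_form_basis_pairing_nonzero:
  fixes A :: "real mat" and P Q :: "complex mat"
  assumes A: "A \<in> carrier_mat n n" and A_sym: "transpose_mat A = A" and A_inv: "invertible_mat A"
    and P: "P \<in> carrier_mat n n" and Q: "Q \<in> carrier_mat n n" and PQ: "P * Q = 1\<^sub>m n" and QP: "Q * P = 1\<^sub>m n"
    and i: "i < n" and j: "j < n"
    and orth: "\<And>k. k < n \<Longrightarrow> k \<noteq> j \<Longrightarrow> bilinear_form (cmat A) (col P i) (col P k) = 0"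
  shows "bilinear_form (cmat A) (col P i) (col P j) \<noteq> 0"
proof
  assume "bilinear_form (cmat A) (col P i) (col P j) = 0"
  with orth have "bilinear_form (cmat A) (col P i) (col P k) = 0" if "k < n" for k
    using that by blast
  then have "col P k \<bullet> (cmat A *\<^sub>v col P i) = 0" if "k < n" for k
    using bilinear_form_symmetric[of "cmat A" n, OF _ cmat_symmetric[OF A_sym], of "col P i" "col P k"]
      that A P i unfolding bilinear_form_def by simp
  then have "cmat A *\<^sub>v col P i = 0\<^sub>v n" using A P i by (intro vec_zero_if_orthogonal_to_cols[OF P Q PQ]) auto
  then have "col P i = 0\<^sub>v n" using cmat_invertible_mult_vec_eq_0[OF A A_inv] P i by simp
  then have "(Q * P) $$ (i, i) = 0" using P Q i by (simp add: scalar_prod_def)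
  then show False unfolding QP using i by simp
qed

lemma segre_22_chains_exist:
  fixes A B :: "real mat" and z :: complex
  assumes A: "A \<in> carrier_mat 4 4" and B: "B \<in> carrier_mat 4 4"
    and A_sym: "transpose_mat A = A" and B_sym: "transpose_mat B = B"
    and Im_z: "Im z \<noteq> 0" and seg: "segre_22 A B z"
  obtains b0 b1 where "segre_22_chains A B z b0 b1"
proof -
  from seg obtain M where A_inv: "invertible_mat A" and M: "M \<in> carrier_mat 4 4"
    and AM: "cmat A * M = cmat B" and jnf: "jordan_nf M [(2, z), (2, cnj z)]"
    unfolding segre_22_def by blast
  obtain P Q where P: "P \<in> carrier_mat 4 4" and Q: "Q \<in> carrier_mat 4 4" and PQ: "P * Q = 1\<^sub>m 4"
    and QP: "Q * P = 1\<^sub>m 4"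
    and M0: "M *\<^sub>v col P 0 = z \<cdot>\<^sub>v col P 0" and M1: "M *\<^sub>v col P 1 = z \<cdot>\<^sub>v col P 1 + col P 0"
    and M2: "M *\<^sub>v col P 2 = cnj z \<cdot>\<^sub>v col P 2" and M3: "M *\<^sub>v col P 3 = cnj z \<cdot>\<^sub>v col P 3 + col P 2"
    using jordan_nf_22_chains[OF M jnf] by blast
  define c where "c k = col P k" for k
  have c: "c k \<in> carrier_vec 4" for k unfolding c_def using P col_dim[of P k] by (simp add: carrier_matD)
  have cA: "cmat A \<in> carrier_mat 4 4" and cB: "cmat B \<in> carrier_mat 4 4" using A B by auto
  have B_mult: "cmat B *\<^sub>v x = cmat A *\<^sub>v (M *\<^sub>v x)" if "x \<in> carrier_vec 4" for x
    unfolding AM[symmetric] using cA M that by simp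
  have chain0: "cmat B *\<^sub>v c 0 = z \<cdot>\<^sub>v (cmat A *\<^sub>v c 0)"
    and chain1: "cmat B *\<^sub>v c 1 = z \<cdot>\<^sub>v (cmat A *\<^sub>v c 1) + cmat A *\<^sub>v c 0"
    and chain2: "cmat B *\<^sub>v c 2 = cnj z \<cdot>\<^sub>v (cmat A *\<^sub>v c 2)"
    and chain3: "cmat B *\<^sub>v c 3 = cnj z \<cdot>\<^sub>v (cmat A *\<^sub>v c 3) + cmat A *\<^sub>v c 2"
    unfolding B_mult[OF c] unfolding c_def M0 M1 M2 M3
    using cA c[unfolded c_def] by (simp_all add: mult_mat_vec mult_add_distrib_mat_vec[OF cA])
  have z_neq_cnj: "z \<noteq> cnj z" using Im_z by (metis cnj.simps(2) neg_equal_zero)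
  note orth = jordan_chains_orthogonal[OF cA cB cmat_symmetric[OF A_sym] cmat_symmetric[OF B_sym]
      z_neq_cnj c c c c chain0 chain1 chain2 chain3]
  have nondegenerate: "bilinear_form (cmat A) (c 0) (c 1) \<noteq> 0"
    unfolding c_def
  proof (rule bilinear_form_basis_pairing_nonzero[OF A A_sym A_inv P Q PQ QP])
    fix k :: nat assume "k < 4" "k \<noteq> 1"
    then have "k = 0 \<or> k = 2 \<or> k = 3" by auto
    then show "bilinear_form (cmat A) (col P 0) (col P k) = 0" using orth unfolding c_def by auto
  qed simp_all
  have "segre_22_chains A B z (c 0) (c 1)"
    by unfold_locales (fact A B A_sym B_sym Im_z c chain0 chain1 nondegenerate)+
  then show thesis by (rule that)
qed

lemma poly_nonzero_of_nonreal_factorization: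
  fixes p :: "real poly" and z :: complex
  assumes Im_z: "Im z \<noteq> 0" and p: "map_poly complex_of_real p = Polynomial.smult c ([:- z, 1:]^2 * [:- cnj z, 1:]^2)"
    and c: "c \<noteq> 0"
  shows "poly p l \<noteq> 0"
proof
  assume "poly p l = 0"
  then have "c * ((of_real l - z)^2 * (of_real l - cnj z)^2) = 0"
    using arg_cong[OF p, of "\<lambda>q. poly q (of_real l)"] by simp
  moreover have "complex_of_real l \<noteq> z" and "complex_of_real l \<noteq> cnj z" using Im_z by (auto simp: complex_eq_iff)
  ultimately show False using c by simp
qed

theorem theorem10:
  fixes A B :: "real mat" and z :: complex
  assumes "A \<in> carrier_mat 4 4" and "B \<in> carrier_mat 4 4"
    and "transpose_mat A = A" and "transpose_mat B = B"
    and "pencil_poly A B \<noteq> 0"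
    and "Im z \<noteq> 0"
    and "\<exists>c. c \<noteq> 0 \<and> map_poly complex_of_real (pencil_poly A B)
            = Polynomial.smult c ([:- z, 1:]^2 * [:- cnj z, 1:]^2)"
    and "segre_22 A B z"
  shows "(\<forall>l::real. poly (pencil_poly A B) l \<noteq> 0) \<and> (\<forall>l::real. Id_idx A B l = 2) \<and>
         (\<exists>L C. real_line L \<and> space_cubic C \<and> qsic A B = L \<union> C \<and>
                (\<forall>X \<in> L \<inter> C. \<not> is_real_vec X))"
proof -
  obtain b0 b1 where "segre_22_chains A B z b0 b1"
    using segre_22_chains_exist[OF assms(1-4,6,8)] .
  then interpret segre_22_chains A B z b0 b1 .
  from assms(7) obtain c where "c \<noteq> 0"
    and "map_poly complex_of_real (pencil_poly A B) = Polynomial.smult c ([:- z, 1:]^2 * [:- cnj z, 1:]^2)"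
    by blast
  then have "poly (pencil_poly A B) l \<noteq> 0" for l :: real
    using poly_nonzero_of_nonreal_factorization Im_z by blast
  then show ?thesis using Id_idx_eq_2 qsic_real_line_and_cubic by blast
qed

end
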